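(* Let $\mathbb{D}$ be the open unit disc and let $Y\subset\mathbb{D}$ have a limit point in $\mathbb{D}$. Let $H^\infty_Y$ denote the space $H^\infty$ of bounded holomorphic functions on $\mathbb{D}$ equipped with the norm $\|f\|=\sup_{y\in Y}|f(y)|$. Then $H^\infty_Y$ is separable if and only if the closure of $Y$ in $\mathbb{C}$ is contained in $\mathbb{D}$. *)

theory Defs
  imports "HOL-Complex_Analysis.Complex_Analysis"
begin

text \<open>H-infinity: bounded holomorphic functions on the open unit disc.
  Functions are total on the complex plane; only their values on the disc matter.\<close>
definition Hinf :: "(complex \<Rightarrow> complex) set" where
  "Hinf = {f. f holomorphic_on ball 0 1 \<and> bounded (f ` ball 0 1)}"

definition Ynorm :: "complex set \<Rightarrow> (complex \<Rightarrow> complex) \<Rightarrow> real" where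
  "Ynorm Y f = (SUP y\<in>Y. cmod (f y))"

definition separable_HinfY :: "complex set \<Rightarrow> bool" where
  "separable_HinfY Y \<longleftrightarrow>
     (\<exists>D. countable D \<and> D \<subseteq> Hinf \<and>
        (\<forall>f\<in>Hinf. \<forall>e>0. \<exists>g\<in>D. Ynorm Y (\<lambda>z. f z - g z) < e))"

end

theory Submission
  imports Defs
begin

(* If a point \<zeta> of the unit circle lies in the closure of Y, consider the functions
  F_t(z) = ((\<zeta> + z) / (\<zeta> - z))^(i t) for real |t| \<le> 1.  They lie in H^\<infinity>, with
  e^(-\<pi>/2) \<le> |F_t| \<le> e^(\<pi>/2), and |F_s(y) - F_t(y)| \<ge> e^(-\<pi>/2) as soon as
  cos ((s - t) M) \<le> 0, where M = log |(\<zeta> + y) / (\<zeta> - y)|.  Points y_k of Y tending to \<zeta>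
  make M_k grow as fast as we like; once M_(k+1) \<ge> 4 M_k, the lacunary sums
  t_E = \<Sum>(k \<in> E) \<pi> / M_k, E \<subseteq> \<nat>, are pairwise separated in this sense at some y_k.  This
  gives uncountably many elements of H^\<infinity>_Y at mutual distance at least e^(-\<pi>/2).
  Conversely, if the closure of Y is a compact subset of the disc, it lies in a disc
  |z| \<le> r < 1 on which Taylor polynomials converge uniformly, so polynomials with
  coefficients in a countable dense subset of \<complex> are dense in H^\<infinity>_Y. *)

lemma lacunary_growth:
  fixes M :: "nat \<Rightarrow> real"
  assumes growth: "\<And>k. 4 * M k \<le> M (Suc k)"
  shows "4 ^ n * M k \<le> M (k + n)"
proof (induction n)
  case 0
  then show ?case by simp
next
  case (Suc n)
  then have "4 * (4 ^ n * M k) \<le> 4 * M (k + n)" by simp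
  also have "\<dots> \<le> M (k + Suc n)" using growth[of "k + n"] by simp
  finally show ?case by simp
qed

lemma lacunary_pos:
  fixes M :: "nat \<Rightarrow> real"
  assumes "\<And>k. 4 * M k \<le> M (Suc k)" and "0 < M 0"
  shows "0 < M k"
proof -
  have "4 ^ k * M 0 \<le> M (0 + k)" using assms(1) by (rule lacunary_growth)
  moreover have "0 < 4 ^ k * M 0" using assms(2) by simp
  ultimately show ?thesis by simp
qed

lemma lacunary_tail_bound:
  fixes M x :: "nat \<Rightarrow> real"
  assumes growth: "\<And>k. 4 * M k \<le> M (Suc k)" and M0: "0 < M 0"
    and x: "\<And>j. \<bar>x j\<bar> \<le> pi / M j"
  shows "summable (\<lambda>j. x (j + k))" and "\<bar>\<Sum>j. x (j + k)\<bar> \<le> 4 * pi / (3 * M k)"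
proof -
  have Mk: "0 < M k" by (rule lacunary_pos[OF growth M0])
  have geom: "(\<lambda>j. pi / M k * (1/4) ^ j) sums (pi / M k * (1 / (1 - 1/4)))"
    by (intro sums_mult geometric_sums) simp
  have dominated: "norm (x (j + k)) \<le> pi / M k * (1/4) ^ j" for j
  proof -
    have "4 ^ j * M k \<le> M (k + j)" using growth by (rule lacunary_growth)
    then have "pi / M (k + j) \<le> pi / (4 ^ j * M k)"
      using Mk lacunary_pos[OF growth M0, of "k + j"] by (intro divide_left_mono) auto
    also have "\<dots> = pi / M k * (1/4) ^ j" by (simp add: power_one_over)
    finally show ?thesis using x[of "j + k"] by (simp add: add.commute)
  qed
  show "summable (\<lambda>j. x (j + k))"
    by (rule summable_comparison_test'[OF sums_summable[OF geom] dominated])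
  have "norm (\<Sum>j. x (j + k)) \<le> (\<Sum>j. pi / M k * (1/4) ^ j)"
    using dominated sums_summable[OF geom] by (rule norm_suminf_le)
  also have "\<dots> = 4 * pi / (3 * M k)" using sums_unique[OF geom] by simp
  finally show "\<bar>\<Sum>j. x (j + k)\<bar> \<le> 4 * pi / (3 * M k)" by simp
qed

definition lacunary_sum :: "(nat \<Rightarrow> real) \<Rightarrow> nat set \<Rightarrow> real" where
  "lacunary_sum M E = (\<Sum>k. if k \<in> E then pi / M k else 0)"

lemma lacunary_sum_bounds:
  fixes M :: "nat \<Rightarrow> real"
  assumes growth: "\<And>k. 4 * M k \<le> M (Suc k)" and M0: "0 < M 0"
  shows "0 \<le> lacunary_sum M E" and "lacunary_sum M E \<le> 4 * pi / (3 * M 0)"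
proof -
  have "\<bar>if j \<in> E then pi / M j else 0\<bar> \<le> pi / M j" for j
    using lacunary_pos[OF growth M0, of j] by simp
  note tail = lacunary_tail_bound[OF growth M0 this, of 0]
  show "0 \<le> lacunary_sum M E"
    unfolding lacunary_sum_def using tail(1) lacunary_pos[OF growth M0]
    by (intro suminf_nonneg) (auto simp: less_imp_le cong: if_cong)
  show "lacunary_sum M E \<le> 4 * pi / (3 * M 0)"
    unfolding lacunary_sum_def using tail(2) by (simp cong: if_cong)
qed

text \<open>The first index where \<open>E\<close> and \<open>E'\<close> differ contributes \<open>\<plusminus>\<pi>/M k\<close>
  to the difference, and all later indices together at most a third of that.\<close>
lemma lacunary_sum_separation:
  fixes M :: "nat \<Rightarrow> real"
  assumes growth: "\<And>k. 4 * M k \<le> M (Suc k)" and M0: "0 < M 0" and "E \<noteq> E'"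
  shows "\<exists>k. cos ((lacunary_sum M E - lacunary_sum M E') * M k) \<le> 0"
proof -
  define k where "k = (LEAST k. (k \<in> E) \<noteq> (k \<in> E'))"
  have k: "(k \<in> E) \<noteq> (k \<in> E')"
  proof -
    have "\<exists>k. (k \<in> E) \<noteq> (k \<in> E')" using \<open>E \<noteq> E'\<close> by blast
    then show ?thesis unfolding k_def by (rule LeastI_ex)
  qed
  have before_k: "(i \<in> E) = (i \<in> E')" if "i < k" for i
    using that not_less_Least unfolding k_def by blast
  have Mpos: "0 < M j" for j by (rule lacunary_pos[OF growth M0])
  define d where "d j = (if j \<in> E then pi / M j else 0) - (if j \<in> E' then pi / M j else 0)" for j
  have d_bound: "\<bar>d j\<bar> \<le> pi / M j" for j
    using Mpos[of j] by (simp add: d_def)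
  note tail = lacunary_tail_bound[OF growth M0 d_bound]
  define R where "R = (\<Sum>j. d (j + Suc k))"
  have summable_term: "summable (\<lambda>j. if j \<in> A then pi / M j else 0)" for A
    using lacunary_tail_bound[OF growth M0, of "\<lambda>j. if j \<in> A then pi / M j else 0" 0] Mpos
    by (simp add: less_imp_le cong: if_cong)
  have "lacunary_sum M E - lacunary_sum M E' = suminf d"
    unfolding lacunary_sum_def d_def by (intro suminf_diff summable_term)
  also have "\<dots> = R + (\<Sum>i<Suc k. d i)"
    unfolding R_def using tail(1)[of 0] by (intro suminf_split_initial_segment) simp
  also have "(\<Sum>i<Suc k. d i) = d k"
    using before_k by (simp add: d_def)
  finally have diff: "lacunary_sum M E - lacunary_sum M E' = R + d k" .
  have "\<bar>R\<bar> \<le> 4 * pi / (3 * M (Suc k))" unfolding R_def by (rule tail(2))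
  also have "\<dots> \<le> 4 * pi / (3 * (4 * M k))"
    using growth[of k] Mpos[of k] by (intro divide_left_mono) auto
  finally have "\<bar>R\<bar> * M k \<le> pi / (3 * M k) * M k"
    using Mpos[of k] by (intro mult_right_mono) auto
  then have "\<bar>R * M k\<bar> \<le> pi / 3"
    using Mpos[of k] by (simp add: abs_mult)
  then have "0 \<le> cos (R * M k)" by (intro cos_ge_zero) auto
  moreover have "d k * M k = pi \<or> d k * M k = - pi"
    using k Mpos[of k] by (auto simp: d_def)
  ultimately have "cos (R * M k + d k * M k) \<le> 0"
    by (auto simp: cos_add)
  then have "cos ((R + d k) * M k) \<le> 0"
    by (simp add: distrib_right)
  with diff show ?thesis by (intro exI[of _ k]) simp
qed

lemma Re_herglotz_kernel_pos:
  fixes \<zeta> z :: complex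
  assumes "norm z < norm \<zeta>"
  shows "0 < Re ((\<zeta> + z) / (\<zeta> - z))"
proof -
  have "\<zeta> - z \<noteq> 0" using assms by auto
  moreover have "Re (\<zeta> + z) * Re (\<zeta> - z) + Im (\<zeta> + z) * Im (\<zeta> - z) = (norm \<zeta>)\<^sup>2 - (norm z)\<^sup>2"
    unfolding cmod_power2 by (simp add: algebra_simps power2_eq_square)
  moreover have "(norm z)\<^sup>2 < (norm \<zeta>)\<^sup>2"
    using assms by (simp add: power_strict_mono)
  ultimately show ?thesis by (simp add: Re_divide')
qed

lemma abs_Im_Ln_herglotz_kernel:
  fixes \<zeta> z :: complex
  assumes "norm z < norm \<zeta>"
  shows "\<bar>Im (Ln ((\<zeta> + z) / (\<zeta> - z)))\<bar> < pi / 2"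
  using Re_herglotz_kernel_pos[OF assms] by (rule Re_Ln_pos_lt_imp)

definition herglotz_power :: "complex \<Rightarrow> real \<Rightarrow> complex \<Rightarrow> complex" where
  "herglotz_power \<zeta> t z = exp (\<i> * of_real t * Ln ((\<zeta> + z) / (\<zeta> - z)))"

lemma norm_herglotz_power:
  "norm (herglotz_power \<zeta> t z) = exp (- t * Im (Ln ((\<zeta> + z) / (\<zeta> - z))))"
  by (simp add: herglotz_power_def)

lemma norm_herglotz_power_bounds:
  fixes \<zeta> z :: complex
  assumes "norm z < norm \<zeta>" and "\<bar>t\<bar> \<le> 1"
  shows "exp (- (pi / 2)) \<le> norm (herglotz_power \<zeta> t z)"
    and "norm (herglotz_power \<zeta> t z) \<le> exp (pi / 2)"
proof -
  have "\<bar>t * Im (Ln ((\<zeta> + z) / (\<zeta> - z)))\<bar> \<le> 1 * (pi / 2)"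
    unfolding abs_mult using assms abs_Im_Ln_herglotz_kernel[OF assms(1)]
    by (intro mult_mono) auto
  then show "exp (- (pi / 2)) \<le> norm (herglotz_power \<zeta> t z)"
    and "norm (herglotz_power \<zeta> t z) \<le> exp (pi / 2)"
    unfolding norm_herglotz_power by (auto simp: abs_le_iff)
qed

lemma herglotz_power_holomorphic:
  "herglotz_power \<zeta> t holomorphic_on ball 0 (norm \<zeta>)"
proof -
  have "(\<zeta> + z) / (\<zeta> - z) \<notin> \<real>\<^sub>\<le>\<^sub>0" and "\<zeta> - z \<noteq> 0" if "z \<in> ball 0 (norm \<zeta>)" for z
    using Re_herglotz_kernel_pos[of z \<zeta>] that by (auto simp: complex_nonpos_Reals_iff)
  then show ?thesis
    unfolding herglotz_power_def by (intro holomorphic_intros) auto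
qed

lemma herglotz_power_Hinf:
  assumes "1 \<le> norm \<zeta>" and "\<bar>t\<bar> \<le> 1"
  shows "herglotz_power \<zeta> t \<in> Hinf"
proof -
  have "herglotz_power \<zeta> t holomorphic_on ball 0 1"
    by (rule holomorphic_on_subset[OF herglotz_power_holomorphic]) (use assms(1) in auto)
  moreover have "bounded (herglotz_power \<zeta> t ` ball 0 1)"
    unfolding bounded_iff using norm_herglotz_power_bounds(2) assms
    by (intro exI[of _ "exp (pi / 2)"]) auto
  ultimately show ?thesis by (simp add: Hinf_def)
qed

text \<open>Writing \<open>w = Ln ((\<zeta> + z) / (\<zeta> - z))\<close>, the difference factors as
  \<open>exp (\<i> t w) (exp (\<i> (s - t) w) - 1)\<close>, and the second factor has real part at most \<open>-1\<close>.\<close>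
lemma herglotz_power_separation:
  fixes \<zeta> z :: complex
  assumes "norm z < norm \<zeta>" and "\<bar>t\<bar> \<le> 1"
    and "cos ((s - t) * Re (Ln ((\<zeta> + z) / (\<zeta> - z)))) \<le> 0"
  shows "exp (- (pi / 2)) \<le> norm (herglotz_power \<zeta> s z - herglotz_power \<zeta> t z)"
proof -
  define w where "w = Ln ((\<zeta> + z) / (\<zeta> - z))"
  define u where "u = exp (\<i> * of_real (s - t) * w)"
  have factor: "herglotz_power \<zeta> s z - herglotz_power \<zeta> t z = herglotz_power \<zeta> t z * (u - 1)"
    unfolding herglotz_power_def u_def w_def[symmetric]
    by (simp add: exp_add[symmetric] algebra_simps)
  have "Re u = exp (- (s - t) * Im w) * cos ((s - t) * Re w)"
    unfolding u_def by (simp add: Re_exp algebra_simps)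
  also have "\<dots> \<le> 0"
    using assms(3) unfolding w_def by (simp add: mult_nonneg_nonpos)
  finally have "1 \<le> \<bar>Re (u - 1)\<bar>" by simp
  also have "\<dots> \<le> norm (u - 1)" by (rule abs_Re_le_cmod)
  finally have "exp (- (pi / 2)) * 1 \<le> norm (herglotz_power \<zeta> t z) * norm (u - 1)"
    using norm_herglotz_power_bounds(1)[OF assms(1,2)] by (intro mult_mono) auto
  then show ?thesis unfolding factor norm_mult by simp
qed

lemma Re_Ln_herglotz_kernel_unbounded:
  fixes Y :: "complex set"
  assumes "Y \<subseteq> ball 0 1" and "\<zeta> \<in> closure Y" and "norm \<zeta> = 1"
  shows "\<exists>y\<in>Y. B \<le> Re (Ln ((\<zeta> + y) / (\<zeta> - y)))"
proof -
  have "0 < min 1 (exp (- B))" by simp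
  then obtain y where "y \<in> Y" and close: "dist y \<zeta> < min 1 (exp (- B))"
    using assms(2) unfolding closure_approachable by blast
  then have "norm y < 1" using assms(1) by auto
  then have ne: "\<zeta> - y \<noteq> 0" using assms(3) by auto
  have small: "norm (\<zeta> - y) < 1" "norm (\<zeta> - y) < exp (- B)"
    using close by (auto simp: dist_norm norm_minus_commute)
  have "2 = norm ((\<zeta> + y) + (\<zeta> - y))" using assms(3) by (simp add: norm_mult)
  also have "\<dots> \<le> norm (\<zeta> + y) + norm (\<zeta> - y)" by (rule norm_triangle_ineq)
  finally have "1 / norm (\<zeta> - y) \<le> norm ((\<zeta> + y) / (\<zeta> - y))"
    using small(1) ne by (simp add: norm_divide divide_right_mono)
  moreover have "exp B < 1 / norm (\<zeta> - y)"
    using small(2) ne by (simp add: exp_minus field_simps)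
  ultimately have "exp B \<le> norm ((\<zeta> + y) / (\<zeta> - y))" by linarith
  moreover have "(\<zeta> + y) / (\<zeta> - y) \<noteq> 0"
    using calculation by (metis exp_gt_zero norm_zero not_le)
  ultimately have "B \<le> Re (Ln ((\<zeta> + y) / (\<zeta> - y)))"
    by (simp add: ln_ge_iff del: divide_eq_0_iff)
  with \<open>y \<in> Y\<close> show ?thesis by blast
qed

lemma lacunary_sequence_exists:
  fixes L :: "'a \<Rightarrow> real"
  assumes "\<And>B. \<exists>y\<in>Y. B \<le> L y"
  obtains ys where "\<And>k. ys k \<in> Y" and "c \<le> L (ys 0)" and "\<And>k. 4 * L (ys k) \<le> L (ys (Suc k))"
proof -
  have "\<exists>ys. \<forall>k. (ys k \<in> Y \<and> c \<le> L (ys k)) \<and> 4 * L (ys k) \<le> L (ys (Suc k))"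
  proof (rule dependent_nat_choice)
    show "\<exists>y. y \<in> Y \<and> c \<le> L y" using assms[of c] by blast
    fix x n
    obtain y where "y \<in> Y" "max c (4 * L x) \<le> L y" using assms by blast
    then show "\<exists>y. (y \<in> Y \<and> c \<le> L y) \<and> 4 * L x \<le> L y" by auto
  qed
  with that show ?thesis by blast
qed

lemma uncountable_UNIV_nat_set: "uncountable (UNIV :: nat set set)"
  using Cantors_theorem[of "UNIV :: nat set"] unfolding uncountable_def by auto

lemma countable_if_separated_near_countable:
  fixes F :: "'i \<Rightarrow> 'a \<Rightarrow> 'b::real_normed_vector"
  assumes "countable D"
    and near: "\<And>i. i \<in> I \<Longrightarrow> \<exists>g\<in>D. \<forall>y\<in>Y. norm (F i y - g y) < c"
    and separated: "\<And>i j. i \<in> I \<Longrightarrow> j \<in> I \<Longrightarrow> i \<noteq> j \<Longrightarrow> \<exists>y\<in>Y. 2 * c \<le> norm (F i y - F j y)"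
  shows "countable I"
proof -
  obtain G where G: "\<And>i. i \<in> I \<Longrightarrow> G i \<in> D \<and> (\<forall>y\<in>Y. norm (F i y - G i y) < c)"
    using near by metis
  have "inj_on G I"
  proof (rule inj_onI, rule ccontr)
    fix i j assume "i \<in> I" "j \<in> I" "G i = G j" "i \<noteq> j"
    then obtain y where "y \<in> Y" "2 * c \<le> norm (F i y - F j y)" using separated by blast
    moreover have "norm (F i y - F j y) \<le> norm (F i y - G i y) + norm (F j y - G j y)"
      using \<open>G i = G j\<close> norm_triangle_ineq4[of "F i y - G i y" "F j y - G j y"] by simp
    moreover have "norm (F i y - G i y) < c" "norm (F j y - G j y) < c"
      using G \<open>i \<in> I\<close> \<open>j \<in> I\<close> \<open>y \<in> Y\<close> by auto
    ultimately show False by linarith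
  qed
  moreover have "countable (G ` I)"
    using G \<open>countable D\<close> by (blast intro: countable_subset)
  ultimately show ?thesis by (blast intro: countable_image_inj_on)
qed

lemma norm_le_Ynorm:
  assumes "bounded (h ` Y)" and "y \<in> Y"
  shows "norm (h y) \<le> Ynorm Y h"
  unfolding Ynorm_def using assms
  by (intro cSUP_upper2[of _ _ y]) (auto simp: bounded_imp_bdd_above bounded_norm_comp)

lemma Ynorm_le:
  assumes "Y \<noteq> {}" and "\<And>y. y \<in> Y \<Longrightarrow> norm (h y) \<le> c"
  shows "Ynorm Y h \<le> c"
  unfolding Ynorm_def using assms by (intro cSUP_least) auto

lemma bounded_diff_Hinf:
  assumes "f \<in> Hinf" and "g \<in> Hinf" and "Y \<subseteq> ball 0 1"
  shows "bounded ((\<lambda>z. f z - g z) ` Y)"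
proof -
  have "bounded ((\<lambda>z. f z - g z) ` ball 0 1)"
    using assms(1,2) unfolding Hinf_def by (auto intro: bounded_minus_comp)
  then show ?thesis by (rule bounded_subset) (use assms(3) in auto)
qed

lemma not_separable_HinfY_if_separated_family:
  assumes "Y \<subseteq> ball 0 1" and "uncountable I" and "0 < c"
    and Hinf: "\<And>i. i \<in> I \<Longrightarrow> F i \<in> Hinf"
    and separated: "\<And>i j. i \<in> I \<Longrightarrow> j \<in> I \<Longrightarrow> i \<noteq> j \<Longrightarrow> \<exists>y\<in>Y. 2 * c \<le> norm (F i y - F j y)"
  shows "\<not> separable_HinfY Y"
proof
  assume "separable_HinfY Y"
  then obtain D where "countable D" "D \<subseteq> Hinf"
    and dense: "\<And>f e. f \<in> Hinf \<Longrightarrow> 0 < e \<Longrightarrow> \<exists>g\<in>D. Ynorm Y (\<lambda>z. f z - g z) < e"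
    unfolding separable_HinfY_def by blast
  have near: "\<exists>g\<in>D. \<forall>y\<in>Y. norm (F i y - g y) < c" if i: "i \<in> I" for i
  proof -
    obtain g where "g \<in> D" and g: "Ynorm Y (\<lambda>z. F i z - g z) < c"
      using dense[OF Hinf[OF i] \<open>0 < c\<close>] by blast
    have "g \<in> Hinf" using \<open>g \<in> D\<close> \<open>D \<subseteq> Hinf\<close> by blast
    have "norm (F i y - g y) < c" if "y \<in> Y" for y
      using norm_le_Ynorm[OF bounded_diff_Hinf[OF Hinf[OF i] \<open>g \<in> Hinf\<close> assms(1)] that] g
      by linarith
    with \<open>g \<in> D\<close> show ?thesis by blast
  qed
  have "countable I"
    using \<open>countable D\<close> near separated by (rule countable_if_separated_near_countable)
  with \<open>uncountable I\<close> show False by contradiction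
qed

lemma not_separable_HinfY_if_boundary_point:
  fixes Y :: "complex set"
  assumes Y: "Y \<subseteq> ball 0 1" and \<zeta>: "\<zeta> \<in> closure Y" "norm \<zeta> = 1"
  shows "\<not> separable_HinfY Y"
proof -
  define L where "L y = Re (Ln ((\<zeta> + y) / (\<zeta> - y)))" for y
  have "\<exists>y\<in>Y. B \<le> L y" for B
    unfolding L_def by (rule Re_Ln_herglotz_kernel_unbounded[OF Y \<zeta>])
  then obtain ys where ys: "\<And>k. ys k \<in> Y" and "2 * pi \<le> L (ys 0)"
    and growth: "\<And>k. 4 * L (ys k) \<le> L (ys (Suc k))"
    using lacunary_sequence_exists[of Y L "2 * pi"] by blast
  define M where "M k = L (ys k)" for k
  note growth = growth[folded M_def]
  have M0: "0 < M 0" using \<open>2 * pi \<le> L (ys 0)\<close> pi_gt_zero unfolding M_def by linarith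
  define t where "t E = lacunary_sum M E" for E
  have t: "\<bar>t E\<bar> \<le> 1" for E
  proof -
    have "4 * pi / (3 * M 0) \<le> 4 * pi / (3 * (2 * pi))"
      using \<open>2 * pi \<le> L (ys 0)\<close> M0 unfolding M_def by (intro divide_left_mono) auto
    also have "\<dots> \<le> 1" by simp
    finally show ?thesis
      using lacunary_sum_bounds[OF growth M0, of E] unfolding t_def abs_le_iff by linarith
  qed
  show ?thesis
  proof (rule not_separable_HinfY_if_separated_family)
    show "uncountable (UNIV :: nat set set)" by (rule uncountable_UNIV_nat_set)
    show "herglotz_power \<zeta> (t E) \<in> Hinf" for E
      using \<zeta>(2) t by (intro herglotz_power_Hinf) auto
    fix E E' :: "nat set" assume "E \<noteq> E'"
    then obtain k where "cos ((t E - t E') * M k) \<le> 0"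
      using lacunary_sum_separation[OF growth M0] unfolding t_def by blast
    moreover have "norm (ys k) < norm \<zeta>" using ys[of k] Y \<zeta>(2) by auto
    ultimately have "exp (- (pi / 2)) \<le> norm (herglotz_power \<zeta> (t E) (ys k) - herglotz_power \<zeta> (t E') (ys k))"
      unfolding M_def L_def by (intro herglotz_power_separation t)
    with ys show "\<exists>y\<in>Y. 2 * (exp (- (pi / 2)) / 2)
        \<le> norm (herglotz_power \<zeta> (t E) y - herglotz_power \<zeta> (t E') y)" by auto
  qed (use Y in auto)
qed

lemma uniform_limit_Taylor_polynomials:
  fixes f :: "complex \<Rightarrow> complex"
  assumes "f holomorphic_on ball \<xi> R" and "r < R"
  shows "uniform_limit (cball \<xi> r)
           (\<lambda>n z. \<Sum>i<n. fps_nth (fps_expansion f \<xi>) i * (z - \<xi>) ^ i) f sequentially"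
proof -
  have "ereal r < ereal R" using assms(2) by simp
  also have "\<dots> \<le> fps_conv_radius (fps_expansion f \<xi>)"
    using conv_radius_fps_expansion[of f \<xi> "ereal R"] assms(1) by simp
  finally have "ereal r < fps_conv_radius (fps_expansion f \<xi>)" .
  then have lim: "uniform_limit (cball \<xi> r) (\<lambda>n z. \<Sum>i<n. fps_nth (fps_expansion f \<xi>) i * (z - \<xi>) ^ i)
      (\<lambda>z. eval_fps (fps_expansion f \<xi>) (z - \<xi>)) sequentially"
    unfolding fps_conv_radius_def eval_fps_def by (rule powser_uniform_limit)
  have eq: "eval_fps (fps_expansion f \<xi>) (z - \<xi>) = f z" if "z \<in> cball \<xi> r" for z
    using eval_fps_expansion[of f \<xi> "ereal R" z] assms that by auto
  show ?thesis by (rule uniform_limit_cong'[THEN iffD1, OF refl eq lim])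
qed

lemma norm_sum_powers_diff_le:
  fixes a b :: "nat \<Rightarrow> 'a::real_normed_div_algebra"
  assumes "\<And>i. i < n \<Longrightarrow> norm (a i - b i) \<le> d" and "norm z \<le> 1"
  shows "norm ((\<Sum>i<n. a i * z ^ i) - (\<Sum>i<n. b i * z ^ i)) \<le> n * d"
proof -
  have "norm ((\<Sum>i<n. a i * z ^ i) - (\<Sum>i<n. b i * z ^ i)) = norm (\<Sum>i<n. (a i - b i) * z ^ i)"
    by (simp add: sum_subtractf left_diff_distrib)
  also have "\<dots> \<le> (\<Sum>i<n. norm (a i - b i) * norm z ^ i)"
    by (rule norm_sum[THEN order_trans]) (simp add: norm_mult norm_power)
  also have "\<dots> \<le> (\<Sum>i<n. d * 1)"
    using assms by (intro sum_mono mult_mono power_le_one) (auto intro: order_trans[OF norm_ge_zero])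
  finally show ?thesis by simp
qed

definition list_poly :: "complex list \<Rightarrow> complex \<Rightarrow> complex" where
  "list_poly cs z = (\<Sum>i<length cs. cs ! i * z ^ i)"

lemma list_poly_Hinf: "list_poly cs \<in> Hinf"
proof -
  have entire: "list_poly cs holomorphic_on UNIV"
    unfolding list_poly_def by (intro holomorphic_intros)
  then have "bounded (list_poly cs ` cball 0 1)"
    by (intro compact_imp_bounded compact_continuous_image holomorphic_on_imp_continuous_on)
       (auto elim: holomorphic_on_subset)
  then have "bounded (list_poly cs ` ball 0 1)" by (rule bounded_subset) auto
  with entire show ?thesis unfolding Hinf_def by (auto elim: holomorphic_on_subset)
qed

lemma holomorphic_approx_by_list_poly:
  fixes C :: "complex set"
  assumes "f holomorphic_on ball 0 1" and "r < 1" and "0 < e"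
    and C_dense: "\<And>c d. 0 < d \<Longrightarrow> \<exists>c'\<in>C. dist c' c < d"
  shows "\<exists>cs\<in>lists C. \<forall>z\<in>cball 0 r. norm (f z - list_poly cs z) < e"
proof -
  define a where "a = fps_nth (fps_expansion f 0)"
  have "\<forall>\<^sub>F n in sequentially. \<forall>z\<in>cball 0 r. dist (\<Sum>i<n. a i * z ^ i) (f z) < e / 2"
    using uniform_limit_Taylor_polynomials[OF assms(1,2)] \<open>0 < e\<close>
    unfolding a_def by (intro uniform_limitD) auto
  then obtain N where "\<forall>n\<ge>N. \<forall>z\<in>cball 0 r. dist (\<Sum>i<n. a i * z ^ i) (f z) < e / 2"
    unfolding eventually_sequentially by blast
  then have N: "norm (f z - (\<Sum>i<N. a i * z ^ i)) < e / 2" if "z \<in> cball 0 r" for z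
    using that by (simp add: dist_norm norm_minus_commute)
  define d where "d = e / (4 * (real N + 1))"
  have "0 < d" using \<open>0 < e\<close> by (simp add: d_def)
  then have "\<exists>c. \<forall>i. c i \<in> C \<and> dist (c i) (a i) < d"
    using C_dense by (intro choice) blast
  then obtain c where c: "\<And>i. c i \<in> C" "\<And>i. dist (c i) (a i) < d"
    by blast
  define cs where "cs = map c [0..<N]"
  have "cs \<in> lists C" using c(1) by (auto simp: cs_def)
  moreover have "norm (f z - list_poly cs z) < e" if "z \<in> cball 0 r" for z
  proof -
    have "list_poly cs z = (\<Sum>i<N. c i * z ^ i)"
      unfolding list_poly_def cs_def by (intro sum.cong) auto
    moreover have "norm ((\<Sum>i<N. a i * z ^ i) - (\<Sum>i<N. c i * z ^ i)) \<le> N * d"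
      using that \<open>r < 1\<close> c(2)
      by (intro norm_sum_powers_diff_le) (auto simp: dist_norm norm_minus_commute less_imp_le)
    moreover have "N * d < e / 2"
      using \<open>0 < e\<close> by (simp add: d_def field_simps) (simp add: add_pos_nonneg)
    ultimately have "norm (f z - list_poly cs z) < e / 2 + e / 2"
      using N[OF that] by (intro norm_diff_triangle_less) auto
    then show ?thesis by simp
  qed
  ultimately show ?thesis by blast
qed

lemma compact_subset_ball_imp_cball:
  fixes K :: "'a::metric_space set"
  assumes "compact K" and "K \<subseteq> ball \<xi> R"
  obtains r where "r < R" and "K \<subseteq> cball \<xi> r"
proof (cases "K = {}")
  case True
  then show ?thesis using that[of "R - 1"] by simp
next
  case False
  have "continuous_on K (\<lambda>y. dist \<xi> y)" by (intro continuous_intros)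
  then obtain x where "x \<in> K" and "\<forall>y\<in>K. dist \<xi> y \<le> dist \<xi> x"
    using continuous_attains_sup[OF assms(1) False] by blast
  moreover have "dist \<xi> x < R" using assms(2) \<open>x \<in> K\<close> by auto
  ultimately show ?thesis by (intro that) auto
qed

lemma separable_HinfY_if_closure_in_disc:
  fixes Y :: "complex set"
  assumes "closure Y \<subseteq> ball 0 1" and "Y \<noteq> {}"
  shows "separable_HinfY Y"
proof -
  have "bounded Y"
    using assms(1) closure_subset by (meson bounded_ball bounded_subset order_trans)
  then have "compact (closure Y)" by (simp add: compact_closure)
  then obtain r where "r < 1" and "closure Y \<subseteq> cball 0 r"
    using assms(1) by (rule compact_subset_ball_imp_cball)
  then have r: "Y \<subseteq> cball 0 r" using closure_subset by blast
  obtain C :: "complex set" where "countable C"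
    and dense: "\<forall>X. open X \<longrightarrow> X \<noteq> {} \<longrightarrow> (\<exists>c\<in>C. c \<in> X)"
    using countable_dense_exists by blast
  have C_dense: "\<exists>c'\<in>C. dist c' c < d" if "0 < d" for c d
  proof -
    have "\<exists>c'\<in>C. c' \<in> ball c d" using dense[rule_format, of "ball c d"] that by auto
    then show ?thesis by (auto simp: dist_commute)
  qed
  have "\<exists>g\<in>list_poly ` lists C. Ynorm Y (\<lambda>z. f z - g z) < e" if "f \<in> Hinf" and "0 < e" for f e
  proof -
    have "f holomorphic_on ball 0 1" using \<open>f \<in> Hinf\<close> by (simp add: Hinf_def)
    then obtain cs where "cs \<in> lists C"
      and cs: "\<forall>z\<in>cball 0 r. norm (f z - list_poly cs z) < e / 2"
      using holomorphic_approx_by_list_poly[OF _ \<open>r < 1\<close> half_gt_zero[OF \<open>0 < e\<close>] C_dense] by blast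
    have "norm (f y - list_poly cs y) \<le> e / 2" if "y \<in> Y" for y
      using cs r that by (meson less_imp_le subsetD)
    then have "Ynorm Y (\<lambda>z. f z - list_poly cs z) \<le> e / 2"
      by (rule Ynorm_le[OF assms(2)])
    then have "Ynorm Y (\<lambda>z. f z - list_poly cs z) < e" using \<open>0 < e\<close> by linarith
    with \<open>cs \<in> lists C\<close> show ?thesis by blast
  qed
  moreover have "countable (list_poly ` lists C)" using \<open>countable C\<close> by simp
  moreover have "list_poly ` lists C \<subseteq> Hinf" using list_poly_Hinf by blast
  ultimately show ?thesis unfolding separable_HinfY_def by blast
qed

theorem lemma5p13:
  fixes Y :: "complex set"
  assumes "Y \<subseteq> ball 0 1"
    and "\<exists>z\<in>ball 0 1. z islimpt Y"
  shows "separable_HinfY Y \<longleftrightarrow> closure Y \<subseteq> ball 0 1"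
proof
  assume "separable_HinfY Y"
  show "closure Y \<subseteq> ball 0 1"
  proof
    fix \<zeta> assume "\<zeta> \<in> closure Y"
    moreover have "closure Y \<subseteq> cball 0 1"
      using assms(1) by (intro closure_minimal) auto
    ultimately have "norm \<zeta> \<le> 1" by auto
    moreover have "norm \<zeta> \<noteq> 1"
      using not_separable_HinfY_if_boundary_point[OF assms(1) \<open>\<zeta> \<in> closure Y\<close>]
        \<open>separable_HinfY Y\<close> by blast
    ultimately show "\<zeta> \<in> ball 0 1" by simp
  qed
next
  assume "closure Y \<subseteq> ball 0 1"
  \<comment> \<open>the limit point hypothesis is needed only to make \<open>Y\<close> nonempty\<close>
  moreover have "Y \<noteq> {}" using assms(2) by (auto simp: islimpt_def)
  ultimately show "separable_HinfY Y" by (rule separable_HinfY_if_closure_in_disc)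
qed

end
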